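(* Let $\kappa$ be an infinite cardinal. If $G$ is a graph with at least $\kappa$ vertices and $G$ has no independent set of size $\kappa$, then $G$ is $(\kappa,\kappa)$-connected.
   Context: A graph is a pair $(V,E)$ with $E\subseteq[V]^2$; an independent set is a set of pairwise non-adjacent vertices. For infinite cardinals $\kappa,\lambda$, a graph is $(\kappa,\lambda)$-connected if after the removal of any set of fewer than $\kappa$ vertices, the number of connected components of the remaining graph is non-zero and less than $\lambda$. *)

theory Defs
  imports Main
begin

definition is_graph :: "'a set \<Rightarrow> 'a set set \<Rightarrow> bool" where
  "is_graph V E \<longleftrightarrow> (\<forall>e\<in>E. e \<subseteq> V \<and> card e = 2)"

definition independent_set :: "'a set \<Rightarrow> 'a set set \<Rightarrow> 'a set \<Rightarrow> bool" where
  "independent_set V E I \<longleftrightarrow> I \<subseteq> V \<and> (\<forall>u\<in>I. \<forall>v\<in>I. u \<noteq> v \<longrightarrow> {u, v} \<notin> E)"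

definition del_vertices :: "'a set set \<Rightarrow> 'a set \<Rightarrow> 'a set set" where
  "del_vertices E S = {e \<in> E. e \<inter> S = {}}"

definition conn_rel :: "'a set \<Rightarrow> 'a set set \<Rightarrow> ('a \<times> 'a) set" where
  "conn_rel V E = {(u, v). u \<in> V \<and> v \<in> V \<and>
      (\<lambda>x y. x \<in> V \<and> y \<in> V \<and> {x, y} \<in> E)\<^sup>*\<^sup>* u v}"

definition components :: "'a set \<Rightarrow> 'a set set \<Rightarrow> 'a set set" where
  "components V E = V // conn_rel V E"

(* (kappa,lambda)-connected (mu = lambda), with kappa, lambda given as cardinals (cardinal orders) *)
definition kl_connected :: "'a set \<Rightarrow> 'a set set \<Rightarrow> 'k rel \<Rightarrow> 'l rel \<Rightarrow> bool" where
  "kl_connected V E \<kappa> \<mu> \<longleftrightarrow>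
     (\<forall>S \<subseteq> V. ordLess2 (card_of S) \<kappa> \<longrightarrow>
        components (V - S) (del_vertices E S) \<noteq> {} \<and>
        ordLess2 (card_of (components (V - S) (del_vertices E S))) \<mu>)"

end

theory Submission
  imports Defs
begin

text \<open>Deleting fewer than \<open>\<kappa>\<close> vertices cannot exhaust a vertex set of size at least \<open>\<kappa>\<close>,
  so at least one component remains. Vertices in distinct components are non-adjacent, so
  choosing one vertex from each component yields an independent set (also in the original
  graph) equinumerous with the set of components; hence there are fewer than \<open>\<kappa>\<close> components.\<close>

unbundle cardinal_syntax

lemma equiv_conn_rel: "equiv V (conn_rel V E)"
proof -
  let ?adj = "\<lambda>x y. x \<in> V \<and> y \<in> V \<and> {x, y} \<in> E"
  have "symp ?adj"
    by (auto intro: sympI simp: insert_commute)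
  then have "symp ?adj\<^sup>*\<^sup>*"
    by (rule symp_rtranclp)
  then show ?thesis
    unfolding equiv_def refl_on_def sym_def trans_def conn_rel_def
    by (auto intro: rtranclp_trans dest: sympD)
qed

lemma conn_rel_edge:
  assumes "u \<in> V" "v \<in> V" "{u, v} \<in> E"
  shows "(u, v) \<in> conn_rel V E"
  using assms unfolding conn_rel_def by auto

lemma components_eq_empty_iff: "components V E = {} \<longleftrightarrow> V = {}"
  unfolding components_def by simp

lemma independent_set_subset:
  "independent_set V E I \<Longrightarrow> J \<subseteq> I \<Longrightarrow> independent_set V E J"
  unfolding independent_set_def by blast

lemma independent_set_del_vertices:
  "independent_set (V - S) (del_vertices E S) I \<Longrightarrow> independent_set V E I"
  unfolding independent_set_def del_vertices_def by blast

lemma independent_set_transversal_components: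
  "\<exists>I. independent_set V E I \<and> |I| =o |components V E|"
proof -
  let ?C = "components V E"
  have eq: "equiv V (conn_rel V E)"
    by (rule equiv_conn_rel)
  define pick where "pick X = (SOME x. x \<in> X)" for X :: "'a set"
  have pick_in: "pick X \<in> X" if "X \<in> ?C" for X
    using in_quotient_imp_non_empty[OF eq] that
    unfolding pick_def components_def by (simp add: some_in_eq)
  have pick_V: "pick X \<in> V" if "X \<in> ?C" for X
    using pick_in[OF that] in_quotient_imp_subset[OF eq] that
    unfolding components_def by blast
  have pick_eqI: "X = Y" if "X \<in> ?C" "Y \<in> ?C" "(pick X, pick Y) \<in> conn_rel V E" for X Y
    using that quotient_eqI[OF eq _ _ pick_in pick_in] unfolding components_def by blast
  have inj: "inj_on pick ?C"
  proof (rule inj_onI)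
    fix X Y assume XY: "X \<in> ?C" "Y \<in> ?C" "pick X = pick Y"
    have "(pick X, pick X) \<in> conn_rel V E"
      using pick_V[OF XY(1)] by (simp add: conn_rel_def)
    with XY show "X = Y"
      using pick_eqI by simp
  qed
  have "independent_set V E (pick ` ?C)"
    unfolding independent_set_def
  proof (intro conjI ballI impI)
    show "pick ` ?C \<subseteq> V"
      using pick_V by blast
    fix u v assume "u \<in> pick ` ?C" "v \<in> pick ` ?C" "u \<noteq> v"
    then obtain X Y where "X \<in> ?C" "Y \<in> ?C" "u = pick X" "v = pick Y" "X \<noteq> Y"
      by blast
    then show "{u, v} \<notin> E"
      using pick_V pick_eqI conn_rel_edge by metis
  qed
  moreover have "|?C| =o |pick ` ?C|"
    using inj_on_imp_bij_betw[OF inj] card_of_ordIso by blast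
  ultimately show ?thesis
    using ordIso_symmetric by blast
qed

lemma ordLeq_card_of_imp_subset_ordIso:
  assumes "Card_order r" "r \<le>o |A|"
  shows "\<exists>B \<subseteq> A. |B| =o r"
proof -
  have Field_r: "|Field r| =o r"
    using assms(1) by (rule card_of_Field_ordIso)
  then have "|Field r| \<le>o |A|"
    using assms(2) by (rule ordIso_ordLeq_trans)
  then obtain B where "B \<subseteq> A" "|Field r| =o |B|"
    using internalize_card_of_ordLeq2 by blast
  then show ?thesis
    using ordIso_transitive[OF ordIso_symmetric Field_r] by blast
qed

lemma many_components_imp_independent_set:
  assumes "Card_order \<kappa>" "\<kappa> \<le>o |components (V - S) (del_vertices E S)|"
  shows "\<exists>I. independent_set V E I \<and> |I| =o \<kappa>"
proof -
  obtain I where I: "independent_set (V - S) (del_vertices E S) I"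
    and "|I| =o |components (V - S) (del_vertices E S)|"
    using independent_set_transversal_components by blast
  then have "\<kappa> \<le>o |I|"
    using assms(2) ordIso_symmetric ordLeq_ordIso_trans by metis
  then obtain J where "J \<subseteq> I" "|J| =o \<kappa>"
    using ordLeq_card_of_imp_subset_ordIso[OF assms(1)] by blast
  then show ?thesis
    using independent_set_subset independent_set_del_vertices I by blast
qed

theorem mainTheorem8:
  fixes V :: "'a set" and E :: "'a set set" and \<kappa> :: "'k rel"
  assumes "Card_order \<kappa>" and "BNF_Cardinal_Arithmetic.cinfinite \<kappa>"
    and "is_graph V E"
    and "ordLeq3 \<kappa> (card_of V)"
    and "\<not> (\<exists>I. independent_set V E I \<and> ordIso2 (card_of I) \<kappa>)"
  shows "kl_connected V E \<kappa> \<kappa>"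
  unfolding kl_connected_def
proof (intro allI impI conjI)
  fix S assume "S \<subseteq> V" "|S| <o \<kappa>"
  let ?C = "components (V - S) (del_vertices E S)"
  have "V - S \<noteq> {}"
  proof
    assume "V - S = {}"
    then have "|V| \<le>o |S|"
      by (intro card_of_mono1) blast
    then have "\<kappa> \<le>o |S|"
      using assms(4) by (rule ordLeq_transitive[rotated])
    then show False
      using \<open>|S| <o \<kappa>\<close> not_ordLess_ordLeq by blast
  qed
  then show "?C \<noteq> {}"
    by (simp add: components_eq_empty_iff)
  have "\<not> \<kappa> \<le>o |?C|"
    using many_components_imp_independent_set[OF assms(1)] assms(5) by blast
  moreover have "Well_order \<kappa>"
    using assms(1) card_order_on_well_order_on by blast
  ultimately show "|?C| <o \<kappa>"
    using not_ordLeq_iff_ordLess[OF card_of_Well_order] by blast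
qed

end
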